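(* Let $n\ge 1$ and let $B$ be the $n\times n$ upper bidiagonal matrix with diagonal entries $B_{kk}=k^2$ for $k=1,\ldots,n$, superdiagonal entries $B_{k,k+1}=-(k+1)(n-k)$ for $k=1,\ldots,n-1$, and all other entries zero. Let $M=[m_{kj}]$ be the $n\times n$ lower-triangular matrix whose entries are $$m_{kj}=\frac{(j+1)_{k-j}\,(n-k+1)_{k-j}}{(2j+1)_{k-j}\,(k-j)!}\quad\text{for } k\ge j,\qquad m_{kj}=0\quad\text{for } k<j,$$ where $(x)_m=x(x+1)\cdots(x+m-1)$ (with $(x)_0=1$). Then $S=M^T$ diagonalizes $B$, namely $S$ is invertible and $SBS^{-1}=\Lambda=\mathrm{Diag}(1^2,2^2,\ldots,n^2)$.
   Context: $(x)_m$ denotes the (rising) Pochhammer symbol. In the paper, $B=VP^{-2}V^{-1}$ where $P$ is the $n\times n$ matrix with $P_{ij}=1/i$ for $j\ge n-i+1$ and $0$ otherwise, and $V_{ij}=(-1)^{i-j}\binom{i-1}{j-1}$ for $i\ge j$; the statement above only concerns the explicit bidiagonal $B$. *)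

theory Defs
  imports Complex_Main "Jordan_Normal_Form.Matrix"
begin

text \<open>All matrices are n x n real matrices of the Jordan_Normal_Form library,
  whose indices are 0-based; entry (i,j) corresponds to the paper's (i+1,j+1).\<close>

definition B_entry :: "nat \<Rightarrow> nat \<Rightarrow> nat \<Rightarrow> real" where
  "B_entry n k j =
     (if j = k then real (k^2)
      else if j = k + 1 then - (real (k + 1) * real (n - k))
      else 0)"

definition m_entry :: "nat \<Rightarrow> nat \<Rightarrow> nat \<Rightarrow> real" where
  "m_entry n k j =
     (if j \<le> k then
        pochhammer (real (j + 1)) (k - j) * pochhammer (real (n - k + 1)) (k - j)
        / (pochhammer (real (2 * j + 1)) (k - j) * fact (k - j))
      else 0)"

definition Bmat :: "nat \<Rightarrow> real mat" where
  "Bmat n = mat n n (\<lambda>(i, j). B_entry n (i + 1) (j + 1))"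

definition Mmat :: "nat \<Rightarrow> real mat" where
  "Mmat n = mat n n (\<lambda>(i, j). m_entry n (i + 1) (j + 1))"

definition Lambda_mat :: "nat \<Rightarrow> real mat" where
  "Lambda_mat n = mat_diag n (\<lambda>i. real ((i + 1)^2))"

end

theory Submission
  imports Defs "Jordan_Normal_Form.Determinant"
begin

text \<open>Row i of S = M^T is a left eigenvector of the bidiagonal matrix B for the eigenvalue
  (i+1)^2. Indeed, writing k = j + e, the entries of column j of M satisfy
  m(k+1,j) / m(k,j) = (k+1)(n-k) / ((e+1)(2j+e+1)), and this denominator is exactly
  (k+1)^2 - j^2, which is the eigen-equation read off column k+1 of B.
  Since S is upper unitriangular it is invertible, so S B S^-1 = Lambda.\<close>

lemma det_upper_unitriangular:
  fixes A :: "'a :: comm_ring_1 mat"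
  assumes "A \<in> carrier_mat n n" "upper_triangular A" "\<And>i. i < n \<Longrightarrow> A $$ (i, i) = 1"
  shows "det A = 1"
proof -
  have "diag_mat A = replicate n 1"
    using assms by (auto simp: diag_mat_def map_replicate_const intro!: replicate_eqI)
  then show ?thesis
    using det_upper_triangular[OF assms(2,1)] by simp
qed

lemma intertwining_mat_conjugates:
  fixes S B L :: "'a :: field mat"
  assumes S: "S \<in> carrier_mat n n" and L: "L \<in> carrier_mat n n"
    and det: "det S \<noteq> 0" and SB: "S * B = L * S"
  shows "invertible_mat S \<and> (\<exists>Q. inverts_mat S Q \<and> inverts_mat Q S \<and> S * B * Q = L)"
proof -
  obtain Q where Q: "Q \<in> carrier_mat n n" and QS: "Q * S = 1\<^sub>m n" and SQ: "S * Q = 1\<^sub>m n"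
    using det_non_zero_imp_unit[OF S det, of "()"] unfolding Units_def ring_mat_def by auto
  have "S * B * Q = L * (S * Q)"
    using L S Q by (simp add: SB assoc_mult_mat)
  also have "\<dots> = L"
    using SQ L by simp
  finally have "S * B * Q = L" .
  moreover have "inverts_mat S Q" "inverts_mat Q S"
    using SQ QS S Q unfolding inverts_mat_def by auto
  ultimately show ?thesis
    using S unfolding invertible_mat_def by auto
qed

lemma m_entry_diag: "m_entry n k k = 1"
  by (simp add: m_entry_def)

lemma m_entry_above_diag: "k < j \<Longrightarrow> m_entry n k j = 0"
  by (simp add: m_entry_def)

lemma m_entry_Suc:
  assumes "j \<le> k" "Suc k \<le> n"
  shows "m_entry n (Suc k) j * (real (Suc k - j) * real (Suc k + j))
         = m_entry n k j * real (Suc k) * real (n - k)"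
proof -
  define e where "e = k - j"
  define P Q D where "P = pochhammer (real (j + 1)) e" and "Q = pochhammer (real (n - k + 1)) e"
    and "D = pochhammer (real (2 * j + 1)) e"
  have k: "real (Suc k) = real j + real e + 1" "real (Suc k + j) = 2 * real j + real e + 1"
    "Suc k - j = Suc e" "k - j = e"
    using assms(1) by (auto simp: e_def)
  have "n - Suc k + 1 = n - k"
    using assms(2) by simp
  then have "m_entry n (Suc k) j =
      pochhammer (real (j + 1)) (Suc e) * pochhammer (real (n - k)) (Suc e)
      / (pochhammer (real (2 * j + 1)) (Suc e) * fact (Suc e))"
    using assms(1) by (simp add: m_entry_def k)
  also have "\<dots> = P * Q * (real j + real e + 1) * real (n - k)
      / (D * fact e * ((real e + 1) * (2 * real j + real e + 1)))"
    unfolding pochhammer_rec[of "real (n - k)"] unfolding pochhammer_Suc fact_Suc P_def Q_def D_def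
    by (simp add: algebra_simps)
  finally have m_Suc: "m_entry n (Suc k) j = \<dots>" .
  have m: "m_entry n k j = P * Q / (D * fact e)"
    using assms(1) by (simp add: m_entry_def k P_def Q_def D_def)
  have "(real e + 1) * (2 * real j + real e + 1) \<noteq> 0"
    by simp
  then show ?thesis
    unfolding m_Suc m k by (simp add: ac_simps)
qed

lemma m_entry_left_eigen:
  assumes "Suc k \<le> n" "j \<ge> 1"
  shows "m_entry n (Suc k) j * ((real (Suc k))\<^sup>2 - (real j)\<^sup>2)
         = m_entry n k j * real (Suc k) * real (n - k)"
proof (cases "j \<le> k")
  case True
  have "(real (Suc k))\<^sup>2 - (real j)\<^sup>2 = real (Suc k - j) * real (Suc k + j)"
    using True by (simp add: of_nat_diff power2_eq_square algebra_simps)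
  then show ?thesis
    using m_entry_Suc[OF True assms(1)] by simp
next
  case False
  then show ?thesis
    by (cases "j = Suc k") (simp_all add: m_entry_above_diag)
qed

lemma sum_mult_B_entry:
  fixes g :: "nat \<Rightarrow> real"
  assumes "j < n"
  shows "(\<Sum>k<n. g k * B_entry n (k + 1) (j + 1))
    = g j * real ((j + 1)\<^sup>2) - (if 0 < j then g (j - 1) * real (j + 1) * real (n - j) else 0)"
proof -
  have "g k * B_entry n (k + 1) (j + 1) =
      (if k = j then g j * real ((j + 1)\<^sup>2) else 0) -
      (if k = j - 1 \<and> 0 < j then g (j - 1) * real (j + 1) * real (n - j) else 0)" for k
    unfolding B_entry_def by (auto simp: Suc_diff_Suc)
  then show ?thesis
    using assms by (simp add: sum_subtractf)
qed

lemma transpose_Mmat_mult_Bmat: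
  "transpose_mat (Mmat n) * Bmat n = Lambda_mat n * transpose_mat (Mmat n)"
    (is "?S * _ = _")
proof (rule eq_matI)
  fix i j assume "i < dim_row (Lambda_mat n * ?S)" "j < dim_col (Lambda_mat n * ?S)"
  then have i: "i < n" and j: "j < n"
    by (simp_all add: Lambda_mat_def Mmat_def mat_diag_def)
  have "(?S * Bmat n) $$ (i, j) = (\<Sum>k<n. m_entry n (k + 1) (i + 1) * B_entry n (k + 1) (j + 1))"
    using i j by (auto simp: Mmat_def Bmat_def scalar_prod_def lessThan_atLeast0 intro!: sum.cong)
  also have "\<dots> = m_entry n (j + 1) (i + 1) * real ((j + 1)\<^sup>2)
      - m_entry n j (i + 1) * real (Suc j) * real (n - j)"
    unfolding sum_mult_B_entry[OF j] by (cases j) (simp_all add: m_entry_def)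
  also have "\<dots> = real ((i + 1)\<^sup>2) * m_entry n (j + 1) (i + 1)"
    using m_entry_left_eigen[of j n "i + 1"] j by (simp add: algebra_simps)
  also have "\<dots> = (Lambda_mat n * ?S) $$ (i, j)"
    using i j by (simp add: Lambda_mat_def Mmat_def mat_diag_mult_left[of _ n n])
  finally show "(?S * Bmat n) $$ (i, j) = (Lambda_mat n * ?S) $$ (i, j)" .
qed (auto simp: Lambda_mat_def Mmat_def Bmat_def mat_diag_def)

lemma det_transpose_Mmat: "det (transpose_mat (Mmat n)) = 1"
  by (rule det_upper_unitriangular[of _ n])
    (auto simp: Mmat_def m_entry_diag m_entry_above_diag intro!: upper_triangularI)

theorem theorem1:
  fixes n :: nat
  assumes "n \<ge> 1"
  defines "S \<equiv> transpose_mat (Mmat n)"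
  shows "invertible_mat S \<and>
    (\<exists>Sinv. inverts_mat S Sinv \<and> inverts_mat Sinv S \<and> S * Bmat n * Sinv = Lambda_mat n)"
  unfolding S_def
  by (rule intertwining_mat_conjugates[of _ n, OF _ _ _ transpose_Mmat_mult_Bmat])
    (simp_all add: det_transpose_Mmat, simp_all add: Mmat_def Lambda_mat_def)

end
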